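(* A ring $R$ is almost Armendariz if and only if the polynomial ring $R[x]$ is almost Armendariz.
   Context: All rings are associative with identity. For a ring $R$, $P(R)$ denotes the prime radical of $R$ (the intersection of all prime ideals of $R$, equivalently the set of strongly nilpotent elements of $R$). A ring $R$ is called almost Armendariz if whenever $f(x)=\sum_{i=0}^m a_ix^i$ and $g(x)=\sum_{j=0}^n b_jx^j\in R[x]$ satisfy $f(x)g(x)=0$, then $a_ib_j\in P(R)$ for all $0\le i\le m$, $0\le j\le n$. *)

theory Defs
  imports "HOL-Algebra.UnivPoly"
begin

text \<open>Prime ideals of a (not necessarily commutative) ring with identity:
  a proper two-sided ideal P such that for all ideals A, B, if AB is contained in P
  then A or B is contained in P.  (AB is contained in P iff all products a b with
  a in A, b in B lie in P, since P is closed under finite sums.)\<close>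
definition nc_prime_ideal :: "'a set \<Rightarrow> ('a, 'm) ring_scheme \<Rightarrow> bool" where
  "nc_prime_ideal P R \<longleftrightarrow> ideal P R \<and> P \<noteq> carrier R \<and>
     (\<forall>A B. ideal A R \<longrightarrow> ideal B R \<longrightarrow>
        (\<forall>a\<in>A. \<forall>b\<in>B. a \<otimes>\<^bsub>R\<^esub> b \<in> P) \<longrightarrow> A \<subseteq> P \<or> B \<subseteq> P)"

definition prime_radical :: "('a, 'm) ring_scheme \<Rightarrow> 'a set" where
  "prime_radical R = {x \<in> carrier R. \<forall>P. nc_prime_ideal P R \<longrightarrow> x \<in> P}"

definition almost_armendariz :: "('a, 'm) ring_scheme \<Rightarrow> bool" where
  "almost_armendariz R \<longleftrightarrow>
     (\<forall>f \<in> carrier (UP R). \<forall>g \<in> carrier (UP R).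
        f \<otimes>\<^bsub>UP R\<^esub> g = \<zero>\<^bsub>UP R\<^esub> \<longrightarrow>
        (\<forall>i j. coeff (UP R) f i \<otimes>\<^bsub>R\<^esub> coeff (UP R) g j \<in> prime_radical R))"

end

theory Submission
  imports Defs
begin

text \<open>The prime radical commutes with adjoining an indeterminate: P(R[x]) = P(R)[x], because
  a prime ideal Q of R[x] contracts to the prime ideal Q \<inter> R of R, and a prime ideal I of R
  extends to the prime ideal I[x] of R[x] (a McCoy-type argument with the highest coefficients
  outside I). Hence R[x] almost Armendariz gives R almost Armendariz by viewing f, g \<in> R[x] as
  polynomials over R[x] with constant coefficients. Conversely, for F, G \<in> R[x][y] with FG = 0,
  the Kronecker substitution y \<mapsto> x^k, for k exceeding all x-degrees, produces f, g \<in> R[x]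
  with fg = 0 whose coefficients are exactly those of the coefficients of F and G; so the
  products of coefficients of F_i and G_j lie in P(R), and F_i G_j \<in> P(R)[x] = P(R[x]).\<close>

lemma nc_prime_idealI:
  assumes "ideal P R" and "P \<noteq> carrier R"
    and "\<And>A B. ideal A R \<Longrightarrow> ideal B R \<Longrightarrow> (\<And>a b. a \<in> A \<Longrightarrow> b \<in> B \<Longrightarrow> a \<otimes>\<^bsub>R\<^esub> b \<in> P)
      \<Longrightarrow> A \<subseteq> P \<or> B \<subseteq> P"
  shows "nc_prime_ideal P R"
  using assms unfolding nc_prime_ideal_def by blast

lemma nc_prime_ideal_imp_ideal: "nc_prime_ideal P R \<Longrightarrow> ideal P R"
  by (simp add: nc_prime_ideal_def)

lemma nc_prime_ideal_proper: "nc_prime_ideal P R \<Longrightarrow> P \<noteq> carrier R"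
  by (simp add: nc_prime_ideal_def)

lemma nc_prime_idealD:
  assumes "nc_prime_ideal P R" and "ideal A R" and "ideal B R"
    and "\<And>a b. a \<in> A \<Longrightarrow> b \<in> B \<Longrightarrow> a \<otimes>\<^bsub>R\<^esub> b \<in> P"
  shows "A \<subseteq> P \<or> B \<subseteq> P"
  using assms unfolding nc_prime_ideal_def by blast

lemma (in ring) idealI':
  assumes "S \<subseteq> carrier R" "\<zero> \<in> S"
    and "\<And>x y. x \<in> S \<Longrightarrow> y \<in> S \<Longrightarrow> x \<oplus> y \<in> S"
    and "\<And>x. x \<in> S \<Longrightarrow> \<ominus> x \<in> S"
    and "\<And>x r. x \<in> S \<Longrightarrow> r \<in> carrier R \<Longrightarrow> r \<otimes> x \<in> S"
    and "\<And>x r. x \<in> S \<Longrightarrow> r \<in> carrier R \<Longrightarrow> x \<otimes> r \<in> S"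
  shows "ideal S R"
proof (rule idealI[OF ring_axioms])
  show "subgroup S (add_monoid R)"
    using assms by (intro subgroup.intro) (auto simp: a_inv_def[symmetric])
qed (use assms in auto)

lemma (in ring) finsum_in_ideal:
  assumes I: "ideal I R" and "finite A" and "\<And>i. i \<in> A \<Longrightarrow> f i \<in> I"
  shows "finsum R f A \<in> I"
  using assms(2,3)
proof (induct A rule: finite_induct)
  case empty
  then show ?case using I by (simp add: additive_subgroup.zero_closed ideal.axioms(1))
next
  case (insert a F)
  then have "f \<in> F \<rightarrow> carrier R" "f a \<in> carrier R" using ideal.Icarr[OF I] by auto
  then show ?case using insert I by (simp add: additive_subgroup.a_closed ideal.axioms(1))
qed

lemma (in ring) finsum_in_ideal_imp_term:
  assumes I: "ideal I R" and A: "finite A" "m \<in> A" and f: "f \<in> A \<rightarrow> carrier R"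
    and others: "\<And>i. i \<in> A - {m} \<Longrightarrow> f i \<in> I" and sum: "finsum R f A \<in> I"
  shows "f m \<in> I"
proof -
  interpret I: ideal I R by (rule I)
  have rest: "finsum R f (A - {m}) \<in> I"
    using A others by (intro finsum_in_ideal[OF I]) auto
  have "finsum R f (insert m (A - {m})) = f m \<oplus> finsum R f (A - {m})"
    using A f by (intro finsum_insert) auto
  moreover have "insert m (A - {m}) = A" using A by blast
  ultimately have "finsum R f A = f m \<oplus> finsum R f (A - {m})" by simp
  then have "f m = finsum R f A \<oplus> \<ominus> finsum R f (A - {m})"
    using A f I.Icarr[OF rest] by (simp add: a_assoc r_neg Pi_iff)
  also have "\<dots> \<in> I" using sum rest by simp
  finally show ?thesis .
qed

text \<open>The ideals A = {x. xRb \<subseteq> P} and B = {y. ARy \<subseteq> P} satisfy AB \<subseteq> P, a \<in> A, b \<in> B.\<close>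
lemma (in ring) nc_prime_idealD_elem:
  assumes P: "nc_prime_ideal P R" and a: "a \<in> carrier R" and b: "b \<in> carrier R"
    and aRb: "\<And>r. r \<in> carrier R \<Longrightarrow> a \<otimes> r \<otimes> b \<in> P"
  shows "a \<in> P \<or> b \<in> P"
proof -
  interpret P: ideal P R using P by (rule nc_prime_ideal_imp_ideal)
  define A where "A = {x\<in>carrier R. \<forall>r\<in>carrier R. x \<otimes> r \<otimes> b \<in> P}"
  define B where "B = {y\<in>carrier R. \<forall>x\<in>A. \<forall>r\<in>carrier R. x \<otimes> r \<otimes> y \<in> P}"
  have iA: "ideal A R"
  proof (rule idealI')
    show "\<zero> \<in> A" using b by (simp add: A_def)
    fix x y assume x: "x \<in> A" and y: "y \<in> A"
    show "x \<oplus> y \<in> A" using x y b unfolding A_def by (auto simp: l_distr)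
  next
    fix x assume x: "x \<in> A"
    show "\<ominus> x \<in> A" using x b unfolding A_def by (auto simp: l_minus)
  next
    fix x r assume x: "x \<in> A" and r: "r \<in> carrier R"
    show "r \<otimes> x \<in> A" using x r b unfolding A_def by (auto simp: m_assoc P.I_l_closed)
    show "x \<otimes> r \<in> A" unfolding A_def
    proof (intro CollectI conjI ballI)
      show "x \<otimes> r \<in> carrier R" using x r by (simp add: A_def)
      fix s assume s: "s \<in> carrier R"
      have "x \<otimes> (r \<otimes> s) \<otimes> b \<in> P" using x r s by (simp add: A_def)
      then show "x \<otimes> r \<otimes> s \<otimes> b \<in> P" using x r s by (simp add: A_def m_assoc)
    qed
  qed (auto simp: A_def)
  have iB: "ideal B R"
  proof (rule idealI')
    show "\<zero> \<in> B" unfolding B_def A_def by auto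
    fix x y assume x: "x \<in> B" and y: "y \<in> B"
    show "x \<oplus> y \<in> B" using x y unfolding B_def A_def by (auto simp: r_distr)
  next
    fix x assume x: "x \<in> B"
    show "\<ominus> x \<in> B" using x unfolding B_def A_def by (auto simp: r_minus)
  next
    fix x r assume x: "x \<in> B" and r: "r \<in> carrier R"
    show "r \<otimes> x \<in> B" using x r unfolding B_def A_def by (auto simp: m_assoc)
    show "x \<otimes> r \<in> B" unfolding B_def
    proof (intro CollectI conjI ballI)
      show "x \<otimes> r \<in> carrier R" using x r by (simp add: B_def)
      fix z s assume z: "z \<in> A" and s: "s \<in> carrier R"
      have zc: "z \<in> carrier R" using z by (simp add: A_def)
      have "z \<otimes> s \<otimes> x \<in> P" using x z s by (simp add: B_def)
      then have "z \<otimes> s \<otimes> x \<otimes> r \<in> P" using r by (simp add: P.I_r_closed)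
      then show "z \<otimes> s \<otimes> (x \<otimes> r) \<in> P" using x r s zc by (simp add: B_def m_assoc)
    qed
  qed (auto simp: B_def)
  have "A \<subseteq> P \<or> B \<subseteq> P"
  proof (rule nc_prime_idealD[OF P iA iB])
    fix x y assume x: "x \<in> A" and y: "y \<in> B"
    then have "x \<otimes> \<one> \<otimes> y \<in> P" unfolding B_def by auto
    then show "x \<otimes> y \<in> P" using x unfolding A_def by simp
  qed
  moreover have "a \<in> A" using a aRb by (simp add: A_def)
  moreover have "b \<in> B" using b unfolding B_def A_def by auto
  ultimately show ?thesis by auto
qed

lemma (in ring) ideal_prime_radical: "ideal (prime_radical R) R"
proof (rule idealI')
  fix x y assume "x \<in> prime_radical R" "y \<in> prime_radical R"
  then show "x \<oplus> y \<in> prime_radical R"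
    by (auto simp: prime_radical_def dest: nc_prime_ideal_imp_ideal
        intro: additive_subgroup.a_closed[OF ideal.axioms(1)])
next
  fix x assume "x \<in> prime_radical R"
  then show "\<ominus> x \<in> prime_radical R"
    by (auto simp: prime_radical_def dest: nc_prime_ideal_imp_ideal
        intro: additive_subgroup.a_inv_closed[OF ideal.axioms(1)])
next
  fix x r assume "x \<in> prime_radical R" "r \<in> carrier R"
  then show "r \<otimes> x \<in> prime_radical R" "x \<otimes> r \<in> prime_radical R"
    by (auto simp: prime_radical_def dest: nc_prime_ideal_imp_ideal
        intro: ideal.I_l_closed ideal.I_r_closed)
qed (auto simp: prime_radical_def dest: nc_prime_ideal_imp_ideal
      intro: additive_subgroup.zero_closed[OF ideal.axioms(1)])

text \<open>UP_ideal I R is the extension I[x] of an ideal of R; UP_contraction Q R is the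
  contraction Q \<inter> R of an ideal of R[x], with R embedded as the constants.\<close>
definition UP_ideal :: "'a set \<Rightarrow> ('a, 'm) ring_scheme \<Rightarrow> (nat \<Rightarrow> 'a) set" where
  "UP_ideal I R = {p \<in> carrier (UP R). \<forall>i. coeff (UP R) p i \<in> I}"

definition UP_contraction :: "(nat \<Rightarrow> 'a) set \<Rightarrow> ('a, 'm) ring_scheme \<Rightarrow> 'a set" where
  "UP_contraction Q R = {c \<in> carrier R. monom (UP R) c 0 \<in> Q}"

context UP_ring
begin

lemma UP_ideal_P: "UP_ideal I R = {p \<in> carrier P. \<forall>i. coeff P p i \<in> I}"
  by (simp add: UP_ideal_def P_def)

lemma UP_contraction_P: "UP_contraction Q R = {c \<in> carrier R. monom P c 0 \<in> Q}"
  by (simp add: UP_contraction_def P_def)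

lemma coeff_monom_one_mult:
  assumes p: "p \<in> carrier P"
  shows "coeff P (monom P \<one> m \<otimes>\<^bsub>P\<^esub> p) n = (if m \<le> n then coeff P p (n - m) else \<zero>)"
proof (cases "m \<le> n")
  case True
  then show ?thesis using coeff_monom_mult[OF R.one_closed p, of m "n - m"] p by simp
next
  case False
  have "coeff P (monom P \<one> m \<otimes>\<^bsub>P\<^esub> p) n
      = (\<Oplus>i\<in>{..n}. (if m = i then \<one> else \<zero>) \<otimes> coeff P p (n - i))"
    using p by simp
  also have "\<dots> = (\<Oplus>i\<in>{..n}. \<zero>)"
    using p False by (intro R.finsum_cong') auto
  finally show ?thesis using False by simp
qed

lemma coeff_mult_monom:
  assumes p: "p \<in> carrier P" and c: "c \<in> carrier R"
  shows "coeff P (p \<otimes>\<^bsub>P\<^esub> monom P c m) n = (if m \<le> n then coeff P p (n - m) \<otimes> c else \<zero>)"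
proof -
  have "coeff P (p \<otimes>\<^bsub>P\<^esub> monom P c m) n
      = (\<Oplus>i\<in>{..n}. if n - m = i \<and> m \<le> n then coeff P p i \<otimes> c else \<zero>)"
    using p c by (simp, intro R.finsum_cong') auto
  also have "\<dots> = (if m \<le> n then coeff P p (n - m) \<otimes> c else \<zero>)"
    using R.finsum_singleton[of "n - m" "{..n}" "\<lambda>i. coeff P p i \<otimes> c"] p c
    by (auto simp: Pi_def)
  finally show ?thesis .
qed

lemma monom_one_mult_commute:
  assumes p: "p \<in> carrier P"
  shows "monom P \<one> m \<otimes>\<^bsub>P\<^esub> p = p \<otimes>\<^bsub>P\<^esub> monom P \<one> m"
  by (rule up_eqI) (use p in \<open>simp_all del: coeff_mult add: coeff_monom_one_mult coeff_mult_monom\<close>)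

lemma coeff_mult_in_ideal:
  assumes J: "ideal J R" and p: "p \<in> carrier P" and q: "q \<in> carrier P"
    and coeffs: "\<And>s t. coeff P p s \<otimes> coeff P q t \<in> J"
  shows "coeff P (p \<otimes>\<^bsub>P\<^esub> q) n \<in> J"
  using p q coeffs by (simp add: R.finsum_in_ideal[OF J])

lemma UP_ideal_is_ideal:
  assumes I: "ideal I R"
  shows "ideal (UP_ideal I R) P"
proof -
  interpret I: ideal I R by (rule I)
  show ?thesis
  proof (rule P.idealI')
    fix x r assume x: "x \<in> UP_ideal I R" and r: "r \<in> carrier P"
    then have xc: "x \<in> carrier P" and xI: "\<And>i. coeff P x i \<in> I" by (auto simp: UP_ideal_P)
    have "coeff P (r \<otimes>\<^bsub>P\<^esub> x) i \<in> I" for i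
      using r xc xI by (intro coeff_mult_in_ideal[OF I] I.I_l_closed) simp_all
    moreover have "coeff P (x \<otimes>\<^bsub>P\<^esub> r) i \<in> I" for i
      using r xc xI by (intro coeff_mult_in_ideal[OF I] I.I_r_closed) simp_all
    ultimately show "r \<otimes>\<^bsub>P\<^esub> x \<in> UP_ideal I R" "x \<otimes>\<^bsub>P\<^esub> r \<in> UP_ideal I R"
      using r xc by (auto simp: UP_ideal_P)
  qed (auto simp: UP_ideal_P)
qed

lemma mem_ideal_if_const_coeffs:
  assumes Q: "ideal Q P" and p: "p \<in> carrier P"
    and const_terms: "\<And>i. monom P (coeff P p i) 0 \<in> Q"
  shows "p \<in> Q"
proof -
  have "monom P (coeff P p i) i \<in> Q" for i
  proof -
    have "monom P (coeff P p i) i = monom P (coeff P p i \<otimes> \<one>) (0 + i)"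
      using p by simp
    also have "\<dots> = monom P (coeff P p i) 0 \<otimes>\<^bsub>P\<^esub> monom P \<one> i"
      using p by (intro monom_mult) simp_all
    finally have "monom P (coeff P p i) i = monom P (coeff P p i) 0 \<otimes>\<^bsub>P\<^esub> monom P \<one> i" .
    then show ?thesis using const_terms Q by (simp add: ideal.I_r_closed)
  qed
  then have "(\<Oplus>\<^bsub>P\<^esub> i \<in> {..deg R p}. monom P (coeff P p i) i) \<in> Q"
    by (intro P.finsum_in_ideal[OF Q]) simp_all
  then show ?thesis using up_repr[OF p] by simp
qed

lemma last_coeff_not_in_ideal:
  assumes I: "ideal I R" and p: "p \<in> carrier P" "p \<notin> UP_ideal I R"
  obtains m where "coeff P p m \<notin> I" and "\<And>i. m < i \<Longrightarrow> coeff P p i \<in> I"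
proof -
  define S where "S = {i. coeff P p i \<notin> I}"
  have "S \<noteq> {}" using p by (auto simp: S_def UP_ideal_P)
  have "S \<subseteq> {..deg R p}"
  proof
    fix i assume "i \<in> S"
    then have "coeff P p i \<noteq> \<zero>"
      using additive_subgroup.zero_closed[OF ideal.axioms(1)[OF I]] by (auto simp: S_def)
    then show "i \<in> {..deg R p}" using deg_aboveD[OF _ p(1)] by (meson atMost_iff not_le)
  qed
  then have "finite S" by (rule finite_subset) simp
  show ?thesis
  proof (rule that)
    show "coeff P p (Max S) \<notin> I" using Max_in[OF \<open>finite S\<close> \<open>S \<noteq> {}\<close>] by (simp add: S_def)
    show "coeff P p i \<in> I" if "Max S < i" for i
      using Max_ge[OF \<open>finite S\<close>, of i] that by (auto simp: S_def)
  qed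
qed

lemma last_coeffs_sandwich_in_ideal:
  assumes I: "ideal I R" and f: "f \<in> carrier P" and g: "g \<in> carrier P" and r: "r \<in> carrier R"
    and f_above: "\<And>i. m < i \<Longrightarrow> coeff P f i \<in> I"
    and g_above: "\<And>i. n < i \<Longrightarrow> coeff P g i \<in> I"
    and frg: "f \<otimes>\<^bsub>P\<^esub> monom P r 0 \<otimes>\<^bsub>P\<^esub> g \<in> UP_ideal I R"
  shows "coeff P f m \<otimes> r \<otimes> coeff P g n \<in> I"
proof -
  interpret I: ideal I R by (rule I)
  let ?t = "\<lambda>i. coeff P f i \<otimes> r \<otimes> coeff P g (m + n - i)"
  have "coeff P (f \<otimes>\<^bsub>P\<^esub> monom P r 0) i = coeff P f i \<otimes> r" for i
    using coeff_mult_monom[OF f r, of 0 i] by simp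
  then have "coeff P (f \<otimes>\<^bsub>P\<^esub> monom P r 0 \<otimes>\<^bsub>P\<^esub> g) (m + n) = (\<Oplus>i\<in>{..m + n}. ?t i)"
    using f g r by (simp del: coeff_mult add: coeff_mult[of "f \<otimes>\<^bsub>P\<^esub> monom P r 0" g])
  moreover have "coeff P (f \<otimes>\<^bsub>P\<^esub> monom P r 0 \<otimes>\<^bsub>P\<^esub> g) (m + n) \<in> I"
    using frg by (simp add: UP_ideal_P del: coeff_mult)
  ultimately have sum: "(\<Oplus>i\<in>{..m + n}. ?t i) \<in> I" by (simp del: coeff_mult)
  have others: "?t i \<in> I" if "i \<in> {..m + n} - {m}" for i
  proof (cases "m < i")
    case True
    then show ?thesis using f_above r g by (simp add: I.I_r_closed)
  next
    case False
    then have "n < m + n - i" using that by auto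
    then show ?thesis using g_above f r by (simp add: I.I_l_closed)
  qed
  have "?t m \<in> I"
    by (rule R.finsum_in_ideal_imp_term[OF I _ _ _ others sum]) (use f g r in \<open>simp_all add: Pi_def\<close>)
  then show ?thesis by simp
qed

lemma UP_ideal_prime:
  assumes I: "nc_prime_ideal I R"
  shows "nc_prime_ideal (UP_ideal I R) P"
proof (rule nc_prime_idealI)
  have iI: "ideal I R" using I by (rule nc_prime_ideal_imp_ideal)
  then show "ideal (UP_ideal I R) P" by (rule UP_ideal_is_ideal)
  show "UP_ideal I R \<noteq> carrier P"
  proof
    assume "UP_ideal I R = carrier P"
    then have "\<one>\<^bsub>P\<^esub> \<in> UP_ideal I R" by simp
    then have "\<one> \<in> I" by (auto simp: UP_ideal_P dest: spec[of _ 0])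
    then show False using nc_prime_ideal_proper[OF I] ideal.one_imp_carrier[OF iI] by simp
  qed
  fix A B assume A: "ideal A P" and B: "ideal B P"
    and AB: "\<And>a b. a \<in> A \<Longrightarrow> b \<in> B \<Longrightarrow> a \<otimes>\<^bsub>P\<^esub> b \<in> UP_ideal I R"
  show "A \<subseteq> UP_ideal I R \<or> B \<subseteq> UP_ideal I R"
  proof (rule ccontr)
    assume "\<not> (A \<subseteq> UP_ideal I R \<or> B \<subseteq> UP_ideal I R)"
    then obtain f g where f: "f \<in> A" "f \<notin> UP_ideal I R" and g: "g \<in> B" "g \<notin> UP_ideal I R"
      by auto
    have fc: "f \<in> carrier P" and gc: "g \<in> carrier P"
      using f g ideal.Icarr[OF A] ideal.Icarr[OF B] by auto
    obtain m where m: "coeff P f m \<notin> I" and f_above: "\<And>i. m < i \<Longrightarrow> coeff P f i \<in> I"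
      using last_coeff_not_in_ideal[OF iI fc f(2)] by blast
    obtain n where n: "coeff P g n \<notin> I" and g_above: "\<And>i. n < i \<Longrightarrow> coeff P g i \<in> I"
      using last_coeff_not_in_ideal[OF iI gc g(2)] by blast
    have "coeff P f m \<otimes> r \<otimes> coeff P g n \<in> I" if r: "r \<in> carrier R" for r
    proof (rule last_coeffs_sandwich_in_ideal[OF iI fc gc r f_above g_above])
      have "f \<otimes>\<^bsub>P\<^esub> monom P r 0 \<in> A" using f r by (intro ideal.I_r_closed[OF A]) simp_all
      then show "f \<otimes>\<^bsub>P\<^esub> monom P r 0 \<otimes>\<^bsub>P\<^esub> g \<in> UP_ideal I R" using AB g by blast
    qed
    then have "coeff P f m \<in> I \<or> coeff P g n \<in> I"
      using fc gc by (intro R.nc_prime_idealD_elem[OF I]) simp_all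
    then show False using m n by simp
  qed
qed

lemma UP_contraction_prime:
  assumes Q: "nc_prime_ideal Q P"
  shows "nc_prime_ideal (UP_contraction Q R) R"
proof (rule nc_prime_idealI)
  have iQ: "ideal Q P" using Q by (rule nc_prime_ideal_imp_ideal)
  interpret Q: ideal Q P by (rule iQ)
  show iC: "ideal (UP_contraction Q R) R"
  proof (rule R.idealI')
    fix x r assume x: "x \<in> UP_contraction Q R" and r: "r \<in> carrier R"
    have "monom P (r \<otimes> x) (0 + 0) = monom P r 0 \<otimes>\<^bsub>P\<^esub> monom P x 0"
      using x r by (intro monom_mult) (auto simp: UP_contraction_P)
    then show "r \<otimes> x \<in> UP_contraction Q R"
      using x r by (auto simp: UP_contraction_P intro: Q.I_l_closed)
    have "monom P (x \<otimes> r) (0 + 0) = monom P x 0 \<otimes>\<^bsub>P\<^esub> monom P r 0"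
      using x r by (intro monom_mult) (auto simp: UP_contraction_P)
    then show "x \<otimes> r \<in> UP_contraction Q R"
      using x r by (auto simp: UP_contraction_P intro: Q.I_r_closed)
  next
    fix x y assume "x \<in> UP_contraction Q R" "y \<in> UP_contraction Q R"
    then show "x \<oplus> y \<in> UP_contraction Q R" by (simp add: UP_contraction_P)
  next
    fix x assume "x \<in> UP_contraction Q R"
    then show "\<ominus> x \<in> UP_contraction Q R" by (simp add: UP_contraction_P)
  qed (simp_all add: UP_contraction_P subset_iff)
  show "UP_contraction Q R \<noteq> carrier R"
  proof
    assume "UP_contraction Q R = carrier R"
    then have "\<one> \<in> UP_contraction Q R" by simp
    then have "\<one>\<^bsub>P\<^esub> \<in> Q" by (simp add: UP_contraction_P)
    then show False using nc_prime_ideal_proper[OF Q] Q.one_imp_carrier by simp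
  qed
  fix A B assume A: "ideal A R" and B: "ideal B R"
    and AB: "\<And>a b. a \<in> A \<Longrightarrow> b \<in> B \<Longrightarrow> a \<otimes> b \<in> UP_contraction Q R"
  interpret A: ideal A R by (rule A)
  interpret B: ideal B R by (rule B)
  have "UP_ideal A R \<subseteq> Q \<or> UP_ideal B R \<subseteq> Q"
  proof (rule nc_prime_idealD[OF Q UP_ideal_is_ideal[OF A] UP_ideal_is_ideal[OF B]])
    fix f g assume f: "f \<in> UP_ideal A R" and g: "g \<in> UP_ideal B R"
    then have fc: "f \<in> carrier P" and gc: "g \<in> carrier P" by (simp_all add: UP_ideal_P)
    have "coeff P f s \<otimes> coeff P g t \<in> UP_contraction Q R" for s t
      using f g by (intro AB) (simp_all add: UP_ideal_P)
    then have "coeff P (f \<otimes>\<^bsub>P\<^esub> g) i \<in> UP_contraction Q R" for i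
      by (rule coeff_mult_in_ideal[OF iC fc gc])
    then have "monom P (coeff P (f \<otimes>\<^bsub>P\<^esub> g) i) 0 \<in> Q" for i
      by (simp add: UP_contraction_P del: coeff_mult)
    then show "f \<otimes>\<^bsub>P\<^esub> g \<in> Q"
      by (rule mem_ideal_if_const_coeffs[OF iQ P.m_closed[OF fc gc]])
  qed
  moreover have "monom P a 0 \<in> UP_ideal A R" if "a \<in> A" for a
    using that by (simp add: UP_ideal_P)
  moreover have "monom P b 0 \<in> UP_ideal B R" if "b \<in> B" for b
    using that by (simp add: UP_ideal_P)
  ultimately show "A \<subseteq> UP_contraction Q R \<or> B \<subseteq> UP_contraction Q R"
    using A.Icarr B.Icarr unfolding UP_contraction_P by blast
qed

lemma prime_radical_UP: "prime_radical P = UP_ideal (prime_radical R) R"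
proof (intro equalityI subsetI)
  fix p assume p: "p \<in> prime_radical P"
  then have pc: "p \<in> carrier P" by (simp add: prime_radical_def)
  have "coeff P p i \<in> I" if I: "nc_prime_ideal I R" for I i
  proof -
    have "p \<in> UP_ideal I R" using p UP_ideal_prime[OF I] by (simp add: prime_radical_def)
    then show ?thesis by (simp add: UP_ideal_P)
  qed
  then show "p \<in> UP_ideal (prime_radical R) R" using pc by (simp add: UP_ideal_P prime_radical_def)
next
  fix p assume p: "p \<in> UP_ideal (prime_radical R) R"
  then have pc: "p \<in> carrier P" by (simp add: UP_ideal_P)
  have "p \<in> Q" if Q: "nc_prime_ideal Q P" for Q
  proof (rule mem_ideal_if_const_coeffs[OF nc_prime_ideal_imp_ideal[OF Q] pc])
    fix i
    have "coeff P p i \<in> UP_contraction Q R"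
      using p UP_contraction_prime[OF Q] by (simp add: UP_ideal_P prime_radical_def)
    then show "monom P (coeff P p i) 0 \<in> Q" by (simp add: UP_contraction_P)
  qed
  then show "p \<in> prime_radical P" using pc by (simp add: prime_radical_def)
qed

lemma uniform_degree_bound:
  fixes Hs :: "nat \<Rightarrow> nat \<Rightarrow> 'a" and d :: nat
  assumes Hc: "\<And>i. Hs i \<in> carrier P" and Hd: "\<And>i. d < i \<Longrightarrow> Hs i = \<zero>\<^bsub>P\<^esub>"
  obtains k where "\<And>i s. k \<le> s \<Longrightarrow> coeff P (Hs i) s = \<zero>"
proof
  fix i s assume s: "Suc (Max ((\<lambda>i. deg R (Hs i)) ` {..d})) \<le> s"
  show "coeff P (Hs i) s = \<zero>"
  proof (cases "i \<le> d")
    case True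
    then have "deg R (Hs i) \<le> Max ((\<lambda>i. deg R (Hs i)) ` {..d})" by (intro Max_ge) auto
    then show ?thesis using s Hc by (intro deg_aboveD) simp_all
  next
    case False
    then show ?thesis using Hd by simp
  qed
qed

lemma coeff_mult_monom_one_block:
  assumes H: "H \<in> carrier P" and Hk: "\<And>s. k \<le> s \<Longrightarrow> coeff P H s = \<zero>" and s: "s < k"
  shows "coeff P (H \<otimes>\<^bsub>P\<^esub> monom P \<one> (k*i)) (k*j+s) = (if j = i then coeff P H s else \<zero>)"
proof (cases i j rule: linorder_cases)
  case less
  then have "k * (i + 1) \<le> k * j" by (intro mult_le_mono2) simp
  then have "k*i + k \<le> k*j" by simp
  then have "k*i \<le> k*j+s" "k \<le> k*j+s - k*i" by linarith+
  then show ?thesis using less H by (simp del: coeff_mult add: coeff_mult_monom Hk)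
next
  case equal
  then show ?thesis using H by (simp del: coeff_mult add: coeff_mult_monom)
next
  case greater
  then have "k * (j + 1) \<le> k * i" by (intro mult_le_mono2) simp
  then have "k*j + k \<le> k*i" by simp
  then have "\<not> k*i \<le> k*j+s" using s by linarith
  then show ?thesis using greater H by (simp del: coeff_mult add: coeff_mult_monom)
qed

lemma coeff_kronecker_sum:
  assumes Hc: "\<And>i. Hs i \<in> carrier P"
    and Hk: "\<And>i s. k \<le> s \<Longrightarrow> coeff P (Hs i) s = \<zero>"
    and Hd: "\<And>i. d < i \<Longrightarrow> Hs i = \<zero>\<^bsub>P\<^esub>"
    and s: "s < k"
  shows "coeff P (\<Oplus>\<^bsub>P\<^esub> i\<in>{..d}. Hs i \<otimes>\<^bsub>P\<^esub> monom P \<one> (k*i)) (k*j+s) = coeff P (Hs j) s"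
proof -
  have "coeff P (\<Oplus>\<^bsub>P\<^esub> i\<in>{..d}. Hs i \<otimes>\<^bsub>P\<^esub> monom P \<one> (k*i)) (k*j+s)
      = (\<Oplus>i\<in>{..d}. coeff P (Hs i \<otimes>\<^bsub>P\<^esub> monom P \<one> (k*i)) (k*j+s))"
    by (rule coeff_finsum) (auto simp: Pi_def Hc)
  also have "\<dots> = (\<Oplus>i\<in>{..d}. if j = i then coeff P (Hs i) s else \<zero>)"
    by (intro R.finsum_cong' coeff_mult_monom_one_block Hc Hk s) (auto simp: Hc)
  also have "\<dots> = coeff P (Hs j) s"
  proof (cases "j \<le> d")
    case True
    then show ?thesis
      using R.finsum_singleton[of j "{..d}" "\<lambda>i. coeff P (Hs i) s"] Hc by (auto simp: Pi_def)
  next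
    case False
    then have "(\<Oplus>i\<in>{..d}. if j = i then coeff P (Hs i) s else \<zero>) = (\<Oplus>i\<in>{..d}. \<zero>)"
      by (intro R.finsum_cong') auto
    then show ?thesis using False Hd[of j] by simp
  qed
  finally show ?thesis .
qed

lemma kronecker_sum_mult_eq_zero:
  assumes Fc: "\<And>i. Fs i \<in> carrier P" and Gc: "\<And>i. Gs i \<in> carrier P"
    and Fd: "\<And>i. dF < i \<Longrightarrow> Fs i = \<zero>\<^bsub>P\<^esub>" and Gd: "\<And>i. dG < i \<Longrightarrow> Gs i = \<zero>\<^bsub>P\<^esub>"
    and Z: "\<And>l. (\<Oplus>\<^bsub>P\<^esub> i\<in>{..l}. Fs i \<otimes>\<^bsub>P\<^esub> Gs (l - i)) = \<zero>\<^bsub>P\<^esub>"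
  shows "(\<Oplus>\<^bsub>P\<^esub> i\<in>{..dF}. Fs i \<otimes>\<^bsub>P\<^esub> monom P \<one> (k*i)) \<otimes>\<^bsub>P\<^esub>
         (\<Oplus>\<^bsub>P\<^esub> i\<in>{..dG}. Gs i \<otimes>\<^bsub>P\<^esub> monom P \<one> (k*i)) = \<zero>\<^bsub>P\<^esub>"
proof -
  let ?X = "\<lambda>n. monom P \<one> n"
  let ?f = "\<lambda>i. Fs i \<otimes>\<^bsub>P\<^esub> ?X (k*i)"
  let ?g = "\<lambda>i. Gs i \<otimes>\<^bsub>P\<^esub> ?X (k*i)"
  have cp: "(\<Oplus>\<^bsub>P\<^esub> l\<in>{..dF+dG}. \<Oplus>\<^bsub>P\<^esub> i\<in>{..l}. ?f i \<otimes>\<^bsub>P\<^esub> ?g (l-i))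
      = (\<Oplus>\<^bsub>P\<^esub> i\<in>{..dF}. ?f i) \<otimes>\<^bsub>P\<^esub> (\<Oplus>\<^bsub>P\<^esub> i\<in>{..dG}. ?g i)"
    by (rule P.cauchy_product) (auto simp: Fd Gd Pi_def Fc Gc)
  have tm: "?f i \<otimes>\<^bsub>P\<^esub> ?g (l-i) = (Fs i \<otimes>\<^bsub>P\<^esub> Gs (l-i)) \<otimes>\<^bsub>P\<^esub> ?X (k*l)"
    if il: "i \<le> l" for i l
  proof -
    have e: "k*i + k*(l-i) = k*l" using il by (simp add: add_mult_distrib2[symmetric])
    have "?f i \<otimes>\<^bsub>P\<^esub> ?g (l-i) = Fs i \<otimes>\<^bsub>P\<^esub> (?X (k*i) \<otimes>\<^bsub>P\<^esub> Gs (l-i)) \<otimes>\<^bsub>P\<^esub> ?X (k*(l-i))"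
      using Fc Gc by (simp add: P.m_assoc)
    also have "\<dots> = Fs i \<otimes>\<^bsub>P\<^esub> (Gs (l-i) \<otimes>\<^bsub>P\<^esub> ?X (k*i)) \<otimes>\<^bsub>P\<^esub> ?X (k*(l-i))"
      using Gc by (simp add: monom_one_mult_commute)
    also have "\<dots> = (Fs i \<otimes>\<^bsub>P\<^esub> Gs (l-i)) \<otimes>\<^bsub>P\<^esub> (?X (k*i) \<otimes>\<^bsub>P\<^esub> ?X (k*(l-i)))"
      using Fc Gc by (simp add: P.m_assoc)
    also have "\<dots> = (Fs i \<otimes>\<^bsub>P\<^esub> Gs (l-i)) \<otimes>\<^bsub>P\<^esub> ?X (k*l)"
      by (simp only: monom_one_mult[symmetric] e)
    finally show ?thesis .
  qed
  have inner: "(\<Oplus>\<^bsub>P\<^esub> i\<in>{..l}. ?f i \<otimes>\<^bsub>P\<^esub> ?g (l-i)) = \<zero>\<^bsub>P\<^esub>" for l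
  proof -
    have "(\<Oplus>\<^bsub>P\<^esub> i\<in>{..l}. ?f i \<otimes>\<^bsub>P\<^esub> ?g (l-i))
        = (\<Oplus>\<^bsub>P\<^esub> i\<in>{..l}. (Fs i \<otimes>\<^bsub>P\<^esub> Gs (l-i)) \<otimes>\<^bsub>P\<^esub> ?X (k*l))"
      by (rule P.finsum_cong') (auto simp: tm Fc Gc)
    also have "\<dots> = (\<Oplus>\<^bsub>P\<^esub> i\<in>{..l}. Fs i \<otimes>\<^bsub>P\<^esub> Gs (l-i)) \<otimes>\<^bsub>P\<^esub> ?X (k*l)"
      by (rule P.finsum_ldistr[symmetric]) (auto simp: Fc Gc)
    also have "\<dots> = \<zero>\<^bsub>P\<^esub>" by (simp add: Z)
    finally show ?thesis .
  qed
  show ?thesis using cp inner by simp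
qed

lemma kronecker_coeff_products_in_ideal:
  fixes Fs Gs :: "nat \<Rightarrow> nat \<Rightarrow> 'a"
  assumes J: "ideal J R"
    and Fc: "\<And>i. Fs i \<in> carrier P" and Gc: "\<And>i. Gs i \<in> carrier P"
    and Fd: "\<And>i. dF < i \<Longrightarrow> Fs i = \<zero>\<^bsub>P\<^esub>" and Gd: "\<And>i. dG < i \<Longrightarrow> Gs i = \<zero>\<^bsub>P\<^esub>"
    and Z: "\<And>l. (\<Oplus>\<^bsub>P\<^esub> i\<in>{..l}. Fs i \<otimes>\<^bsub>P\<^esub> Gs (l - i)) = \<zero>\<^bsub>P\<^esub>"
    and zero_products: "\<And>f g a b. f \<in> carrier P \<Longrightarrow> g \<in> carrier P \<Longrightarrow> f \<otimes>\<^bsub>P\<^esub> g = \<zero>\<^bsub>P\<^esub>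
      \<Longrightarrow> coeff P f a \<otimes> coeff P g b \<in> J"
  shows "coeff P (Fs i) s \<otimes> coeff P (Gs j) t \<in> J"
proof -
  obtain kF where kF: "\<And>i s. kF \<le> s \<Longrightarrow> coeff P (Fs i) s = \<zero>"
    using uniform_degree_bound[of Fs dF, OF Fc Fd] by blast
  obtain kG where kG: "\<And>i s. kG \<le> s \<Longrightarrow> coeff P (Gs i) s = \<zero>"
    using uniform_degree_bound[of Gs dG, OF Gc Gd] by blast
  define k where "k = max kF kG"
  have HF: "\<And>i s. k \<le> s \<Longrightarrow> coeff P (Fs i) s = \<zero>"
    and HG: "\<And>i s. k \<le> s \<Longrightarrow> coeff P (Gs i) s = \<zero>"
    using kF kG by (simp_all add: k_def)
  define f where "f = (\<Oplus>\<^bsub>P\<^esub> i\<in>{..dF}. Fs i \<otimes>\<^bsub>P\<^esub> monom P \<one> (k*i))"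
  define g where "g = (\<Oplus>\<^bsub>P\<^esub> i\<in>{..dG}. Gs i \<otimes>\<^bsub>P\<^esub> monom P \<one> (k*i))"
  have fc: "f \<in> carrier P" and gc: "g \<in> carrier P"
    unfolding f_def g_def by (auto intro!: P.finsum_closed simp: Fc Gc)
  have fg: "f \<otimes>\<^bsub>P\<^esub> g = \<zero>\<^bsub>P\<^esub>"
    unfolding f_def g_def by (rule kronecker_sum_mult_eq_zero[OF Fc Gc Fd Gd Z])
  show ?thesis
  proof (cases "s < k \<and> t < k")
    case True
    then have "coeff P f (k*i+s) = coeff P (Fs i) s" and "coeff P g (k*j+t) = coeff P (Gs j) t"
      unfolding f_def g_def by (simp_all add: coeff_kronecker_sum Fc Gc HF HG Fd Gd)
    then show ?thesis using zero_products[OF fc gc fg, of "k*i+s" "k*j+t"] by simp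
  next
    case False
    then have "coeff P (Fs i) s \<otimes> coeff P (Gs j) t = \<zero>" using HF HG Fc Gc by auto
    then show ?thesis using additive_subgroup.zero_closed[OF ideal.axioms(1)[OF J]] by simp
  qed
qed

end

lemma UP_ringI: "ring R \<Longrightarrow> UP_ring R"
  by (simp add: UP_ring_def)

definition const_coeffs :: "('a, 'm) ring_scheme \<Rightarrow> (nat \<Rightarrow> 'a) \<Rightarrow> nat \<Rightarrow> nat \<Rightarrow> 'a" where
  "const_coeffs R f = (\<lambda>n. monom (UP R) (coeff (UP R) f n) 0)"

lemma
  assumes R: "ring R" and f: "f \<in> carrier (UP R)"
  shows const_coeffs_closed: "const_coeffs R f \<in> carrier (UP (UP R))"
    and coeff_const_coeffs: "coeff (UP (UP R)) (const_coeffs R f) n = monom (UP R) (coeff (UP R) f n) 0"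
proof -
  interpret U: UP_ring R "UP R" by (rule UP_ringI[OF R])
  have carrier_eq: "carrier (UP (UP R)) = up (UP R)" by (simp add: UP_def)
  show closed: "const_coeffs R f \<in> carrier (UP (UP R))"
    unfolding carrier_eq
  proof (rule mem_upI)
    show "const_coeffs R f n \<in> carrier (UP R)" for n using f by (simp add: const_coeffs_def)
    have "bound \<zero>\<^bsub>UP R\<^esub> (deg R f) (const_coeffs R f)"
      by (rule bound.intro) (simp add: const_coeffs_def U.deg_aboveD[OF _ f])
    then show "\<exists>n. bound \<zero>\<^bsub>UP R\<^esub> n (const_coeffs R f)" by blast
  qed
  show "coeff (UP (UP R)) (const_coeffs R f) n = monom (UP R) (coeff (UP R) f n) 0"
    using closed by (simp add: UP_def const_coeffs_def)
qed

lemma const_coeffs_mult: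
  assumes R: "ring R" and f: "f \<in> carrier (UP R)" and g: "g \<in> carrier (UP R)"
  shows "const_coeffs R f \<otimes>\<^bsub>UP (UP R)\<^esub> const_coeffs R g = const_coeffs R (f \<otimes>\<^bsub>UP R\<^esub> g)"
proof -
  interpret U: UP_ring R "UP R" by (rule UP_ringI[OF R])
  interpret V: UP_ring "UP R" "UP (UP R)" by (rule UP_ringI[OF U.UP_ring])
  interpret const: ring_hom_ring R "UP R" "\<lambda>a. monom (UP R) a 0"
    by (rule ring_hom_ring.intro[OF R U.UP_ring]) (simp add: ring_hom_ring_axioms_def U.const_ring_hom)
  let ?a = "coeff (UP R) f" and ?b = "coeff (UP R) g"
  have fc: "const_coeffs R f \<in> carrier (UP (UP R))" and gc: "const_coeffs R g \<in> carrier (UP (UP R))"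
    using const_coeffs_closed[OF R] f g by auto
  show ?thesis
  proof (rule V.up_eqI)
    fix n
    have "coeff (UP (UP R)) (const_coeffs R f \<otimes>\<^bsub>UP (UP R)\<^esub> const_coeffs R g) n
        = (\<Oplus>\<^bsub>UP R\<^esub> i\<in>{..n}. monom (UP R) (?a i) 0 \<otimes>\<^bsub>UP R\<^esub> monom (UP R) (?b (n - i)) 0)"
      using fc gc f g by (simp add: coeff_const_coeffs[OF R])
    also have "\<dots> = (\<Oplus>\<^bsub>UP R\<^esub> i\<in>{..n}. monom (UP R) (?a i \<otimes>\<^bsub>R\<^esub> ?b (n - i)) 0)"
      using f g by (intro U.P.finsum_cong') (auto simp: U.monom_mult[of _ _ 0 0, simplified])
    also have "\<dots> = monom (UP R) (\<Oplus>\<^bsub>R\<^esub> i\<in>{..n}. ?a i \<otimes>\<^bsub>R\<^esub> ?b (n - i)) 0"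
      using f g by (simp add: Pi_def comp_def)
    also have "\<dots> = coeff (UP (UP R)) (const_coeffs R (f \<otimes>\<^bsub>UP R\<^esub> g)) n"
      using f g by (simp add: coeff_const_coeffs[OF R])
    finally show "coeff (UP (UP R)) (const_coeffs R f \<otimes>\<^bsub>UP (UP R)\<^esub> const_coeffs R g) n
        = coeff (UP (UP R)) (const_coeffs R (f \<otimes>\<^bsub>UP R\<^esub> g)) n" .
  qed (use fc gc f g const_coeffs_closed[OF R] in simp_all)
qed

lemma const_coeffs_zero:
  assumes R: "ring R"
  shows "const_coeffs R \<zero>\<^bsub>UP R\<^esub> = \<zero>\<^bsub>UP (UP R)\<^esub>"
proof -
  interpret U: UP_ring R "UP R" by (rule UP_ringI[OF R])
  interpret V: UP_ring "UP R" "UP (UP R)" by (rule UP_ringI[OF U.UP_ring])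
  show ?thesis
    by (rule V.up_eqI) (simp_all add: coeff_const_coeffs[OF R] const_coeffs_closed[OF R])
qed

lemma almost_armendariz_of_UP:
  assumes R: "ring R" and A: "almost_armendariz (UP R)"
  shows "almost_armendariz R"
  unfolding almost_armendariz_def
proof (intro ballI impI allI)
  interpret U: UP_ring R "UP R" by (rule UP_ringI[OF R])
  fix f g i j
  assume f: "f \<in> carrier (UP R)" and g: "g \<in> carrier (UP R)"
    and fg: "f \<otimes>\<^bsub>UP R\<^esub> g = \<zero>\<^bsub>UP R\<^esub>"
  let ?a = "coeff (UP R) f i" and ?b = "coeff (UP R) g j"
  have "const_coeffs R f \<otimes>\<^bsub>UP (UP R)\<^esub> const_coeffs R g = \<zero>\<^bsub>UP (UP R)\<^esub>"
    using const_coeffs_mult[OF R f g] fg const_coeffs_zero[OF R] by simp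
  then have "coeff (UP (UP R)) (const_coeffs R f) i \<otimes>\<^bsub>UP R\<^esub> coeff (UP (UP R)) (const_coeffs R g) j
      \<in> prime_radical (UP R)"
    using A const_coeffs_closed[OF R] f g unfolding almost_armendariz_def by blast
  moreover have "coeff (UP (UP R)) (const_coeffs R f) i \<otimes>\<^bsub>UP R\<^esub> coeff (UP (UP R)) (const_coeffs R g) j
      = monom (UP R) (?a \<otimes>\<^bsub>R\<^esub> ?b) 0"
    using f g U.monom_mult[of ?a ?b 0 0] by (simp add: coeff_const_coeffs[OF R])
  ultimately have "monom (UP R) (?a \<otimes>\<^bsub>R\<^esub> ?b) 0 \<in> UP_ideal (prime_radical R) R"
    by (simp add: U.prime_radical_UP)
  then show "?a \<otimes>\<^bsub>R\<^esub> ?b \<in> prime_radical R"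
    using f g by (auto simp: U.UP_ideal_P dest: spec[of _ 0])
qed

lemma almost_armendariz_UP:
  assumes R: "ring R" and A: "almost_armendariz R"
  shows "almost_armendariz (UP R)"
  unfolding almost_armendariz_def
proof (intro ballI impI allI)
  interpret U: UP_ring R "UP R" by (rule UP_ringI[OF R])
  interpret V: UP_ring "UP R" "UP (UP R)" by (rule UP_ringI[OF U.UP_ring])
  fix F G i j
  assume F: "F \<in> carrier (UP (UP R))" and G: "G \<in> carrier (UP (UP R))"
    and FG: "F \<otimes>\<^bsub>UP (UP R)\<^esub> G = \<zero>\<^bsub>UP (UP R)\<^esub>"
  define Fs where "Fs = coeff (UP (UP R)) F"
  define Gs where "Gs = coeff (UP (UP R)) G"
  have Fc: "\<And>i. Fs i \<in> carrier (UP R)" and Gc: "\<And>i. Gs i \<in> carrier (UP R)"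
    using F G by (simp_all add: Fs_def Gs_def)
  have Fd: "\<And>i. deg (UP R) F < i \<Longrightarrow> Fs i = \<zero>\<^bsub>UP R\<^esub>"
    and Gd: "\<And>i. deg (UP R) G < i \<Longrightarrow> Gs i = \<zero>\<^bsub>UP R\<^esub>"
    using F G by (simp_all add: Fs_def Gs_def V.deg_aboveD)
  have coeff_FG: "(\<Oplus>\<^bsub>UP R\<^esub> i\<in>{..l}. Fs i \<otimes>\<^bsub>UP R\<^esub> Gs (l - i)) = \<zero>\<^bsub>UP R\<^esub>" for l
    using F G FG V.coeff_mult[OF F G, of l] by (simp add: Fs_def Gs_def)
  have "coeff (UP R) (Fs i) s \<otimes>\<^bsub>R\<^esub> coeff (UP R) (Gs j) t \<in> prime_radical R" for s t
    using U.kronecker_coeff_products_in_ideal[OF U.R.ideal_prime_radical Fc Gc Fd Gd coeff_FG]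
      A[unfolded almost_armendariz_def]
    by (metis (no_types))
  then have "coeff (UP R) (Fs i \<otimes>\<^bsub>UP R\<^esub> Gs j) n \<in> prime_radical R" for n
    by (rule U.coeff_mult_in_ideal[OF U.R.ideal_prime_radical Fc Gc])
  then have "Fs i \<otimes>\<^bsub>UP R\<^esub> Gs j \<in> UP_ideal (prime_radical R) R"
    using Fc Gc by (simp add: U.UP_ideal_P del: U.coeff_mult)
  then show "coeff (UP (UP R)) F i \<otimes>\<^bsub>UP R\<^esub> coeff (UP (UP R)) G j \<in> prime_radical (UP R)"
    by (simp add: U.prime_radical_UP Fs_def Gs_def)
qed

theorem theorem2p3:
  fixes R :: "('a, 'm) ring_scheme"
  assumes "ring R"
  shows "almost_armendariz R \<longleftrightarrow> almost_armendariz (UP R)"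
  using almost_armendariz_UP[OF assms] almost_armendariz_of_UP[OF assms] by blast

end
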